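(* Let $u_0\in C^1_{\mathrm{ub}}(\mathbb{R})$ satisfy $u_0(-x)=-u_0(x)$ for all $x\in\mathbb{R}$. Let $u\in C([0,\infty),C_{\mathrm{ub}}(\mathbb{R}))$ be the unique global mild solution of the modular Burgers' equation $u_t=u_{xx}+|u|_x$ with $u(0,\cdot)=u_0$. Then $u(t,-x)=-u(t,x)$ for all $t\ge0$ and $x\in\mathbb{R}$.
   Context: $C_{\mathrm{ub}}(\mathbb{R})$ is the space of bounded uniformly continuous functions with the sup-norm; $C^1_{\mathrm{ub}}(\mathbb{R})$ the space of $C^1$ functions $g$ with $g,g'\in C_{\mathrm{ub}}(\mathbb{R})$. The mild solution is the unique $u\in C([0,\infty),C_{\mathrm{ub}}(\mathbb{R}))$ satisfying $$u(t,\cdot)=e^{\partial_x^2 t}u_0+\int_0^t\partial_x e^{\partial_x^2(t-s)}|u(s,\cdot)|\,ds,$$ where $(e^{\partial_x^2 t}g)(x)=\int_{\mathbb{R}}(4\pi t)^{-1/2}e^{-(x-y)^2/(4t)}g(y)\,dy$. *)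

theory Defs
  imports "HOL-Analysis.Analysis"
begin

definition Cub :: "(real \<Rightarrow> real) set" where
  "Cub = {g. bounded (range g) \<and> uniformly_continuous_on UNIV g}"

definition C1ub :: "(real \<Rightarrow> real) set" where
  "C1ub = {g. g differentiable_on UNIV \<and> g \<in> Cub \<and> deriv g \<in> Cub}"

definition heat :: "real \<Rightarrow> (real \<Rightarrow> real) \<Rightarrow> real \<Rightarrow> real" where
  "heat t g x = (if t \<le> 0 then g x else
     integral UNIV (\<lambda>y. (4 * pi * t) powr (-1/2) * exp (- ((x - y)^2) / (4 * t)) * g y))"

text \<open>u is continuous from [0,\<infinity>) into C_ub(R) (sup-norm topology).\<close>
definition cont_Cub_path :: "(real \<Rightarrow> real \<Rightarrow> real) \<Rightarrow> bool" where
  "cont_Cub_path u \<longleftrightarrow> (\<forall>t\<ge>0. u t \<in> Cub) \<and>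
     (\<forall>t\<ge>0. \<forall>e>0. \<exists>d>0. \<forall>s\<ge>0. \<bar>s - t\<bar> < d \<longrightarrow> (\<forall>x. \<bar>u s x - u t x\<bar> \<le> e))"

text \<open>Mild solution of u_t = u_xx + |u|_x with initial datum u0 (Duhamel formula,
  evaluated pointwise in x).\<close>
definition mild_solution :: "(real \<Rightarrow> real) \<Rightarrow> (real \<Rightarrow> real \<Rightarrow> real) \<Rightarrow> bool" where
  "mild_solution u0 u \<longleftrightarrow> cont_Cub_path u \<and>
     (\<forall>t\<ge>0. \<forall>x. u t x = heat t u0 x +
        integral {0..t} (\<lambda>s. deriv (\<lambda>z. heat (t - s) (\<lambda>y. \<bar>u s y\<bar>) z) x))"

end

(* Reflection v t x = - u t (- x) maps mild solutions with odd initial datum to mild solutions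
   with the same datum: the heat kernel is even and |v s| is the reflection of |u s|, so the
   Duhamel term transforms like u itself.  The theorem therefore follows from uniqueness of mild
   solutions.  For uniqueness, the x-derivative of the heat semigroup is a Gaussian first moment,
   d/dx e^{tau d_xx} g (x) = (2 tau)^(-1/2) * E[Z g(x + sqrt (2 tau) Z)] with Z standard normal;
   since E|Z| <= 1, the Duhamel terms of two solutions differ by at most
   int_a^t sup|u s - v s| / sqrt (2 (t - s)) ds when the solutions agree up to time a.  On a step
   of length 1/8 this is at most half the supremum of the difference, so the solutions agree up
   to time a + 1/8, and induction over the steps covers all times. *)
theory Submission
  imports Defs "HOL-Probability.Distributions"
begin

section \<open>Differentiation under the integral sign\<close>

lemma integrable_mult_bounded:
  fixes w g :: "'a \<Rightarrow> real"
  assumes w: "integrable M w" and g: "g \<in> borel_measurable M" and bound: "\<And>y. \<bar>g y\<bar> \<le> B"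
  shows "integrable M (\<lambda>y. w y * g y)"
proof (rule Bochner_Integration.integrable_bound)
  show "integrable M (\<lambda>y. B * w y)" using w by simp
  show "(\<lambda>y. w y * g y) \<in> borel_measurable M" using w g by measurable
  have "\<bar>w y\<bar> * \<bar>g y\<bar> \<le> B * \<bar>w y\<bar>" for y
    using bound[of y] by (metis abs_ge_zero mult.commute mult_left_mono)
  moreover have "0 \<le> B" using bound[of undefined] by linarith
  ultimately show "AE y in M. norm (w y * g y) \<le> norm (B * w y)"
    by (intro AE_I2) (simp add: abs_mult)
qed

lemma tendsto_integral_dominated:
  fixes s :: "'i::first_countable_topology \<Rightarrow> 'a \<Rightarrow> real"
  assumes meas: "\<And>i. i \<in> S \<Longrightarrow> s i \<in> borel_measurable M" "f \<in> borel_measurable M"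
    and w: "integrable M w"
    and lim: "AE y in M. ((\<lambda>i. s i y) \<longlongrightarrow> f y) (at i0 within S)"
    and bound: "eventually (\<lambda>i. AE y in M. \<bar>s i y\<bar> \<le> w y) (at i0 within S)"
  shows "((\<lambda>i. \<integral>y. s i y \<partial>M) \<longlongrightarrow> (\<integral>y. f y \<partial>M)) (at i0 within S)"
  unfolding tendsto_at_iff_sequentially
proof (intro allI impI)
  fix X :: "nat \<Rightarrow> 'i"
  assume XS: "\<forall>n. X n \<in> S - {i0}" and "X \<longlonglongrightarrow> i0"
  then have X: "filterlim X (at i0 within S) sequentially"
    by (simp add: filterlim_at)
  obtain N where N: "\<And>n. N \<le> n \<Longrightarrow> AE y in M. \<bar>s (X n) y\<bar> \<le> w y"
    using filterlim_iff[THEN iffD1, OF X, rule_format, OF bound]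
    by (auto simp: eventually_sequentially)
  have "(\<lambda>n. \<integral>y. s (X (n + N)) y \<partial>M) \<longlonglongrightarrow> (\<integral>y. f y \<partial>M)"
  proof (rule integral_dominated_convergence[OF meas(2) _ w])
    show "AE y in M. (\<lambda>n. s (X (n + N)) y) \<longlonglongrightarrow> f y"
      using lim by eventually_elim (intro LIMSEQ_ignore_initial_segment filterlim_compose[OF _ X])
    show "AE y in M. norm (s (X (n + N)) y) \<le> w y" for n
      using N[of "n + N"] by simp
  qed (use meas XS in simp_all)
  then show "((\<lambda>i. \<integral>y. s i y \<partial>M) \<circ> X) \<longlonglongrightarrow> (\<integral>y. f y \<partial>M)"
    unfolding o_def by (rule LIMSEQ_offset)
qed

lemma has_real_derivative_integral_dominated:
  fixes f f' :: "real \<Rightarrow> 'a \<Rightarrow> real"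
  assumes r: "r > 0"
    and int: "\<And>m. integrable M (f m)"
    and meas: "f' x \<in> borel_measurable M"
    and deriv: "\<And>m y. y \<in> space M \<Longrightarrow> ((\<lambda>m. f m y) has_real_derivative f' m y) (at m)"
    and w: "integrable M w"
    and bound: "\<And>m y. y \<in> space M \<Longrightarrow> \<bar>m - x\<bar> \<le> r \<Longrightarrow> \<bar>f' m y\<bar> \<le> w y"
  shows "((\<lambda>m. \<integral>y. f m y \<partial>M) has_real_derivative (\<integral>y. f' x y \<partial>M)) (at x)"
proof -
  have quotient: "((\<integral>y. f (x + h) y \<partial>M) - (\<integral>y. f x y \<partial>M)) / h
      = (\<integral>y. (f (x + h) y - f x y) / h \<partial>M)" for h
  proof -
    have "((\<integral>y. f (x + h) y \<partial>M) - (\<integral>y. f x y \<partial>M)) / h = (\<integral>y. f (x + h) y - f x y \<partial>M) / h"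
      using int by (simp add: Bochner_Integration.integral_diff)
    then show ?thesis by simp
  qed
  have "((\<lambda>h. \<integral>y. (f (x + h) y - f x y) / h \<partial>M) \<longlongrightarrow> (\<integral>y. f' x y \<partial>M)) (at 0)"
  proof (rule tendsto_integral_dominated[OF _ meas w])
    show "(\<lambda>y. (f (x + h) y - f x y) / h) \<in> borel_measurable M" for h
      using int[of "x + h"] int[of x] by measurable
    show "AE y in M. ((\<lambda>h. (f (x + h) y - f x y) / h) \<longlongrightarrow> f' x y) (at 0)"
      using deriv by (intro AE_I2) (simp add: DERIV_def)
    have "eventually (\<lambda>h. h \<noteq> 0 \<and> \<bar>h\<bar> < r) (at (0::real))"
      using r by (auto simp: eventually_at dist_real_def intro!: exI[of _ r])
    then show "eventually (\<lambda>h. AE y in M. \<bar>(f (x + h) y - f x y) / h\<bar> \<le> w y) (at 0)"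
    proof eventually_elim
      case (elim h)
      have "norm (f (x + h) y - f x y) \<le> w y * norm (x + h - x)" if y: "y \<in> space M" for y
      proof (rule field_differentiable_bound[where S = "{x - r .. x + r}" and f = "\<lambda>m. f m y"])
        show "((\<lambda>m. f m y) has_field_derivative f' m y) (at m within {x - r .. x + r})" for m
          using deriv[OF y] by (rule has_field_derivative_at_within)
        show "norm (f' m y) \<le> w y" if "m \<in> {x - r .. x + r}" for m
        proof -
          have "\<bar>m - x\<bar> \<le> r" using that by auto
          then show ?thesis using bound[OF y] by simp
        qed
      qed (use elim in auto)
      then show ?case
        using elim by (intro AE_I2) (simp add: abs_divide divide_le_eq)
    qed
  qed
  then show ?thesis
    by (simp add: DERIV_def quotient)
qed

section \<open>The heat semigroup and its derivative\<close>

lemma heat_kernel_eq_normal_density: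
  assumes "\<tau> > 0"
  shows "(4 * pi * \<tau>) powr (-1/2) * exp (- ((x - y)^2) / (4 * \<tau>)) = normal_density x (sqrt (2 * \<tau>)) y"
proof -
  have "(4 * pi * \<tau>) powr (-1/2) = 1 / sqrt (2 * pi * (sqrt (2 * \<tau>))\<^sup>2)"
    using assms by (simp add: powr_minus_divide powr_half_sqrt)
  moreover have "- ((x - y)^2) / (4 * \<tau>) = - (y - x)\<^sup>2 / (2 * (sqrt (2 * \<tau>))\<^sup>2)"
    using assms by (simp add: power2_commute)
  ultimately show ?thesis
    unfolding normal_density_def by simp
qed

lemma heat_eq_normal_convolution:
  assumes "\<tau> > 0" "g \<in> borel_measurable borel" "\<And>y. \<bar>g y\<bar> \<le> B"
  shows "heat \<tau> g x = (\<integral>y. normal_density x (sqrt (2 * \<tau>)) y * g y \<partial>lborel)"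
  unfolding heat_def heat_kernel_eq_normal_density[OF assms(1)]
  using assms by (auto intro!: integral_lborel integrable_mult_bounded)

lemma has_real_derivative_normal_density_mean:
  assumes "\<sigma> > 0"
  shows "((\<lambda>m. normal_density m \<sigma> y) has_real_derivative normal_density m \<sigma> y * ((y - m) / \<sigma>\<^sup>2)) (at m)"
proof -
  have "((\<lambda>m. exp (- (y - m)\<^sup>2 / (2 * \<sigma>\<^sup>2))) has_real_derivative
      exp (- (y - m)\<^sup>2 / (2 * \<sigma>\<^sup>2)) * ((y - m) / \<sigma>\<^sup>2)) (at m)"
    using assms by (auto intro!: derivative_eq_intros simp: field_simps power2_eq_square)
  from DERIV_cmult[OF this, of "1 / sqrt (2 * pi * \<sigma>\<^sup>2)"] show ?thesis
    unfolding normal_density_def by (simp add: ac_simps)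
qed

lemma normal_density_shift_le:
  assumes \<sigma>: "\<sigma> > 0" and m: "\<bar>m - x\<bar> \<le> 1"
  shows "normal_density m \<sigma> y \<le> sqrt 2 * exp (1 / (2 * \<sigma>\<^sup>2)) * normal_density x (sqrt 2 * \<sigma>) y"
proof -
  have "(m - x)\<^sup>2 \<le> 1" using m abs_le_square_iff[of "m - x" 1] by simp
  moreover have "(y - x)\<^sup>2 \<le> 2 * (y - m)\<^sup>2 + 2 * (m - x)\<^sup>2"
    using zero_le_power2[of "(y - m) - (m - x)"] by (simp add: power2_eq_square algebra_simps)
  ultimately have "- (y - m)\<^sup>2 / (2 * \<sigma>\<^sup>2) \<le> 1 / (2 * \<sigma>\<^sup>2) + - (y - x)\<^sup>2 / (2 * (sqrt 2 * \<sigma>)\<^sup>2)"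
    using \<sigma> by (simp add: field_simps)
  then have "exp (- (y - m)\<^sup>2 / (2 * \<sigma>\<^sup>2))
      \<le> exp (1 / (2 * \<sigma>\<^sup>2)) * exp (- (y - x)\<^sup>2 / (2 * (sqrt 2 * \<sigma>)\<^sup>2))"
    by (simp add: exp_add[symmetric])
  moreover have "sqrt (2 * pi * (sqrt 2 * \<sigma>)\<^sup>2) = sqrt 2 * sqrt (2 * pi * \<sigma>\<^sup>2)"
    by (simp add: power_mult_distrib real_sqrt_mult)
  ultimately show ?thesis
    using \<sigma> unfolding normal_density_def by (simp add: divide_right_mono)
qed

lemma has_real_derivative_normal_convolution:
  assumes \<sigma>: "\<sigma> > 0" and g: "g \<in> borel_measurable borel" and bound: "\<And>y. \<bar>g y\<bar> \<le> B"
  shows "((\<lambda>x. \<integral>y. normal_density x \<sigma> y * g y \<partial>lborel) has_real_derivative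
           (\<integral>y. normal_density x \<sigma> y * ((y - x) / \<sigma>\<^sup>2) * g y \<partial>lborel)) (at x)"
proof (rule has_real_derivative_integral_dominated[where r = 1])
  define A where "A = sqrt 2 * exp (1 / (2 * \<sigma>\<^sup>2))"
  define c where "c = A * B / \<sigma>\<^sup>2"
  show "integrable lborel (\<lambda>y. normal_density m \<sigma> y * g y)" for m
    using \<sigma> g bound by (intro integrable_mult_bounded[where B = B, OF integrable_normal_density])
      simp_all
  show "(\<lambda>y. normal_density x \<sigma> y * ((y - x) / \<sigma>\<^sup>2) * g y) \<in> borel_measurable lborel"
    using g by measurable
  show "((\<lambda>m. normal_density m \<sigma> y * g y) has_real_derivative
      normal_density m \<sigma> y * ((y - m) / \<sigma>\<^sup>2) * g y) (at m)" for m y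
    using \<sigma> by (intro DERIV_cmult_right has_real_derivative_normal_density_mean)
  show "integrable lborel (\<lambda>y. c * (normal_density x (sqrt 2 * \<sigma>) y * \<bar>y - x\<bar> ^ 1
      + normal_density x (sqrt 2 * \<sigma>) y))"
    using \<sigma> by (intro integrable_mult_right Bochner_Integration.integrable_add
        integrable_normal_moment_abs integrable_normal_density) auto
  fix m y
  assume m: "\<bar>m - x\<bar> \<le> 1"
  have "\<bar>y - m\<bar> \<le> \<bar>y - x\<bar> + 1" using m by linarith
  have "\<bar>normal_density m \<sigma> y * ((y - m) / \<sigma>\<^sup>2) * g y\<bar>
      = normal_density m \<sigma> y * \<bar>y - m\<bar> / \<sigma>\<^sup>2 * \<bar>g y\<bar>"
    by (simp add: abs_mult)
  also have "\<dots> \<le> (A * normal_density x (sqrt 2 * \<sigma>) y) * (\<bar>y - x\<bar> + 1) / \<sigma>\<^sup>2 * B"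
    using normal_density_shift_le[OF \<sigma> m, of y] bound[of y] \<sigma> \<open>\<bar>y - m\<bar> \<le> \<bar>y - x\<bar> + 1\<close>
    unfolding A_def by (intro mult_mono divide_right_mono) auto
  also have "\<dots> = c * (normal_density x (sqrt 2 * \<sigma>) y * \<bar>y - x\<bar> ^ 1 + normal_density x (sqrt 2 * \<sigma>) y)"
    by (simp add: c_def field_simps)
  finally show "\<bar>normal_density m \<sigma> y * ((y - m) / \<sigma>\<^sup>2) * g y\<bar>
      \<le> c * (normal_density x (sqrt 2 * \<sigma>) y * \<bar>y - x\<bar> ^ 1 + normal_density x (sqrt 2 * \<sigma>) y)" .
qed simp

definition gauss_first_moment :: "(real \<Rightarrow> real) \<Rightarrow> real \<Rightarrow> real \<Rightarrow> real" where
  "gauss_first_moment g \<sigma> x = (\<integral>z. std_normal_density z * z * g (x + \<sigma> * z) \<partial>lborel)"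

lemma normal_convolution_deriv_eq:
  assumes \<sigma>: "\<sigma> > 0"
  shows "(\<integral>y. normal_density x \<sigma> y * ((y - x) / \<sigma>\<^sup>2) * g y \<partial>lborel) = gauss_first_moment g \<sigma> x / \<sigma>"
proof -
  have density: "normal_density x \<sigma> (x + \<sigma> * z) = std_normal_density z / \<sigma>" for z
    using \<sigma> by (simp add: normal_density_def real_sqrt_mult field_simps)
  have "(\<integral>y. normal_density x \<sigma> y * ((y - x) / \<sigma>\<^sup>2) * g y \<partial>lborel)
      = \<bar>\<sigma>\<bar> *\<^sub>R (\<integral>z. normal_density x \<sigma> (x + \<sigma> * z) * ((x + \<sigma> * z - x) / \<sigma>\<^sup>2) * g (x + \<sigma> * z) \<partial>lborel)"
    using \<sigma> by (intro lborel_integral_real_affine) simp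
  also have "\<dots> = (\<integral>z. \<sigma> * (normal_density x \<sigma> (x + \<sigma> * z) * ((x + \<sigma> * z - x) / \<sigma>\<^sup>2)
      * g (x + \<sigma> * z)) \<partial>lborel)"
    using \<sigma> by simp
  also have "\<dots> = (\<integral>z. std_normal_density z * z * g (x + \<sigma> * z) / \<sigma> \<partial>lborel)"
    by (rule Bochner_Integration.integral_cong) (use \<sigma> in \<open>simp_all add: density power2_eq_square\<close>)
  also have "\<dots> = gauss_first_moment g \<sigma> x / \<sigma>"
    unfolding gauss_first_moment_def by (rule integral_divide_zero)
  finally show ?thesis .
qed

lemma deriv_heat:
  assumes "\<tau> > 0" "g \<in> borel_measurable borel" "\<And>y. \<bar>g y\<bar> \<le> B"
  shows "deriv (heat \<tau> g) x = gauss_first_moment g (sqrt (2 * \<tau>)) x / sqrt (2 * \<tau>)"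
proof -
  have "heat \<tau> g = (\<lambda>x. \<integral>y. normal_density x (sqrt (2 * \<tau>)) y * g y \<partial>lborel)"
    using heat_eq_normal_convolution[OF assms] by blast
  then show ?thesis
    using assms has_real_derivative_normal_convolution[of "sqrt (2 * \<tau>)" g B x]
      normal_convolution_deriv_eq[of "sqrt (2 * \<tau>)" x g]
    by (auto intro: DERIV_imp_deriv)
qed

lemma gauss_first_moment_diff_le:
  assumes [measurable]: "g \<in> borel_measurable borel" "h \<in> borel_measurable borel"
    and gB: "\<And>y. \<bar>g y\<bar> \<le> Bg" and hB: "\<And>y. \<bar>h y\<bar> \<le> Bh" and diff: "\<And>y. \<bar>g y - h y\<bar> \<le> \<epsilon>"
  shows "\<bar>gauss_first_moment g \<sigma> x - gauss_first_moment h \<sigma> x\<bar> \<le> \<epsilon>"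
proof -
  have moment: "has_bochner_integral lborel (\<lambda>z. std_normal_density z * \<bar>z\<bar>) (sqrt (2 / pi))"
    using std_normal_moment_abs_odd[of 0] by simp
  have int: "integrable lborel (\<lambda>z. std_normal_density z * z * k (x + \<sigma> * z))"
    if k: "k \<in> borel_measurable borel" "\<And>y. \<bar>k y\<bar> \<le> K" for k K
  proof (rule integrable_mult_bounded)
    show "integrable lborel (\<lambda>z. std_normal_density z * z)"
      using integrable_std_normal_moment[of 1] by simp
    show "(\<lambda>z. k (x + \<sigma> * z)) \<in> borel_measurable lborel"
      using k(1) by measurable
  qed (use k in blast)
  have ig: "integrable lborel (\<lambda>z. std_normal_density z * z * g (x + \<sigma> * z))"
    using gB by (intro int) auto
  have ih: "integrable lborel (\<lambda>z. std_normal_density z * z * h (x + \<sigma> * z))"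
    using hB by (intro int) auto
  have "gauss_first_moment g \<sigma> x - gauss_first_moment h \<sigma> x
      = (\<integral>z. std_normal_density z * z * g (x + \<sigma> * z) - std_normal_density z * z * h (x + \<sigma> * z) \<partial>lborel)"
    unfolding gauss_first_moment_def by (rule Bochner_Integration.integral_diff[OF ig ih, symmetric])
  also have "\<bar>\<dots>\<bar> \<le> (\<integral>z. std_normal_density z * \<bar>z\<bar> * \<epsilon> \<partial>lborel)"
  proof (rule integral_abs_bound_integral)
    show "integrable lborel
        (\<lambda>z. std_normal_density z * z * g (x + \<sigma> * z) - std_normal_density z * z * h (x + \<sigma> * z))"
      using ig ih by simp
    show "integrable lborel (\<lambda>z. std_normal_density z * \<bar>z\<bar> * \<epsilon>)"
      using moment by (simp add: integrable.intros)
    show "\<bar>std_normal_density z * z * g (x + \<sigma> * z) - std_normal_density z * z * h (x + \<sigma> * z)\<bar>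
        \<le> std_normal_density z * \<bar>z\<bar> * \<epsilon>" for z
      using diff[of "x + \<sigma> * z"]
      by (simp add: abs_mult mult_left_mono flip: right_diff_distrib)
  qed
  also have "\<dots> = sqrt (2 / pi) * \<epsilon>"
    using has_bochner_integral_integral_eq[OF moment] by simp
  also have "\<dots> \<le> \<epsilon>"
  proof -
    have "sqrt (2 / pi) \<le> 1" using pi_gt3 by simp
    moreover have "0 \<le> \<epsilon>" by (meson abs_ge_zero diff order_trans)
    ultimately show ?thesis using mult_left_le_one_le[of \<epsilon> "sqrt (2 / pi)"] by simp
  qed
  finally show ?thesis .
qed

section \<open>Continuous paths in \<open>C_ub\<close>\<close>

lemma Cub_bounded:
  assumes "g \<in> Cub"
  obtains B where "\<And>y. \<bar>g y\<bar> \<le> B"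
  using assms unfolding Cub_def bounded_iff by auto

lemma Cub_borel_measurable: "g \<in> Cub \<Longrightarrow> g \<in> borel_measurable borel"
  unfolding Cub_def
  by (auto intro: borel_measurable_continuous_onI uniformly_continuous_imp_continuous)

lemma Cub_reflect:
  assumes g: "g \<in> Cub"
  shows "(\<lambda>x. - g (- x)) \<in> Cub"
proof -
  obtain B where "\<And>y. \<bar>g y\<bar> \<le> B" using Cub_bounded[OF g] by blast
  then have "bounded (range (\<lambda>x. - g (- x)))"
    unfolding bounded_iff by auto
  moreover have "uniformly_continuous_on UNIV (\<lambda>x. - g (- x))"
  proof -
    have "uniformly_continuous_on UNIV (\<lambda>x :: real. - x)"
      by (intro uniformly_continuous_on_minus uniformly_continuous_on_id)
    moreover have "range (\<lambda>x :: real. - x) = UNIV"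
      by (rule surjI[where f = uminus]) simp
    moreover have "uniformly_continuous_on UNIV g"
      using g unfolding Cub_def by blast
    ultimately show ?thesis
      by (metis uniformly_continuous_on_compose uniformly_continuous_on_minus)
  qed
  ultimately show ?thesis
    unfolding Cub_def by blast
qed

lemma cont_Cub_path_locally_bounded:
  assumes u: "cont_Cub_path u" and t: "0 \<le> t"
  shows "\<exists>d B. d > 0 \<and> (\<forall>s y. 0 \<le> s \<longrightarrow> \<bar>s - t\<bar> < d \<longrightarrow> \<bar>u s y\<bar> \<le> B)"
proof -
  obtain B where B: "\<And>y. \<bar>u t y\<bar> \<le> B"
    using u t Cub_bounded unfolding cont_Cub_path_def by metis
  obtain d where "d > 0" and d: "\<forall>s\<ge>0. \<bar>s - t\<bar> < d \<longrightarrow> (\<forall>y. \<bar>u s y - u t y\<bar> \<le> 1)"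
    using u t unfolding cont_Cub_path_def by (meson zero_less_one)
  have "\<bar>u s y\<bar> \<le> B + 1" if "0 \<le> s" "\<bar>s - t\<bar> < d" for s y
  proof -
    have "\<bar>u s y - u t y\<bar> \<le> 1" using d that by blast
    then show ?thesis using B[of y] by linarith
  qed
  with \<open>d > 0\<close> show ?thesis by blast
qed

lemma cont_Cub_path_bounded:
  assumes u: "cont_Cub_path u"
  obtains B where "\<And>s y. 0 \<le> s \<Longrightarrow> s \<le> T \<Longrightarrow> \<bar>u s y\<bar> \<le> B"
proof -
  obtain d B where d: "\<And>t. 0 \<le> t \<Longrightarrow> d t > 0"
    and B: "\<And>t s y. 0 \<le> t \<Longrightarrow> 0 \<le> s \<Longrightarrow> \<bar>s - t\<bar> < d t \<Longrightarrow> \<bar>u s y\<bar> \<le> B t"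
    using cont_Cub_path_locally_bounded[OF u] by metis
  obtain K where K: "K \<subseteq> {0..T}" "finite K" "{0..T} \<subseteq> (\<Union>t\<in>K. ball t (d t))"
  proof (rule compactE_image[of "{0..T}" "{0..T}" "\<lambda>t. ball t (d t)"])
    show "{0..T} \<subseteq> (\<Union>t\<in>{0..T}. ball t (d t))"
      using d by force
  qed auto
  show thesis
  proof (rule that[of "\<Sum>t\<in>K. \<bar>B t\<bar>"])
    fix s y
    assume "0 \<le> s" "s \<le> T"
    then obtain t where t: "t \<in> K" "dist t s < d t"
      using K(3) by force
    then have "\<bar>u s y\<bar> \<le> \<bar>B t\<bar>"
      using B[of t s y] K(1) \<open>0 \<le> s\<close> by (force simp: dist_real_def abs_minus_commute)
    also have "\<dots> \<le> (\<Sum>t\<in>K. \<bar>B t\<bar>)"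
      using K(2) t(1) by (intro member_le_sum) auto
    finally show "\<bar>u s y\<bar> \<le> (\<Sum>t\<in>K. \<bar>B t\<bar>)" .
  qed
qed

lemma cont_Cub_path_continuous_on:
  assumes u: "cont_Cub_path u"
  shows "continuous_on ({0..} \<times> UNIV) (\<lambda>(s, y). u s y)"
  unfolding continuous_on_iff
proof (intro ballI allI impI)
  fix p :: "real \<times> real" and e :: real
  assume p: "p \<in> {0..} \<times> UNIV" and e: "0 < e"
  obtain s0 y0 where p_eq: "p = (s0, y0)" and s0: "0 \<le> s0"
    using p by auto
  have e3: "e / 3 > 0" using e by simp
  obtain d1 where "d1 > 0" and d1: "\<forall>s\<ge>0. \<bar>s - s0\<bar> < d1 \<longrightarrow> (\<forall>y. \<bar>u s y - u s0 y\<bar> \<le> e / 3)"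
    using u s0 e3 unfolding cont_Cub_path_def by blast
  have "continuous_on UNIV (u s0)"
    using u s0 unfolding cont_Cub_path_def Cub_def by (auto intro: uniformly_continuous_imp_continuous)
  then obtain d2 where "d2 > 0" and d2: "\<forall>y. dist y y0 < d2 \<longrightarrow> dist (u s0 y) (u s0 y0) < e / 3"
    using e3 unfolding continuous_on_iff by blast
  show "\<exists>d>0. \<forall>q\<in>{0..} \<times> UNIV. dist q p < d \<longrightarrow> dist ((\<lambda>(s, y). u s y) q) ((\<lambda>(s, y). u s y) p) < e"
  proof (intro exI[of _ "min d1 d2"] conjI ballI impI)
    show "0 < min d1 d2" using \<open>d1 > 0\<close> \<open>d2 > 0\<close> by simp
    fix q
    assume q: "q \<in> {0..} \<times> UNIV" and "dist q p < min d1 d2"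
    then obtain s y where q_eq: "q = (s, y)" and "0 \<le> s" "dist s s0 < d1" "dist y y0 < d2"
      using dist_fst_le[of q p] dist_snd_le[of q p] p_eq by (cases q) auto
    then have "dist (u s y) (u s0 y) \<le> e / 3" "dist (u s0 y) (u s0 y0) < e / 3"
      using d1 d2 by (auto simp: dist_real_def)
    then have "dist (u s y) (u s0 y0) < e"
      using dist_triangle[of "u s y" "u s0 y0" "u s0 y"] e by linarith
    then show "dist ((\<lambda>(s, y). u s y) q) ((\<lambda>(s, y). u s y) p) < e"
      by (simp add: p_eq q_eq)
  qed
qed

section \<open>Uniqueness of mild solutions\<close>

text \<open>Agrees with the integrand of \<open>mild_solution\<close> for \<open>s < t\<close>; at \<open>s = t\<close>, where that
  one is \<open>deriv (\<lambda>y. \<bar>u t y\<bar>)\<close> and uncontrolled, division by zero makes this one \<open>0\<close>.\<close>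
definition duhamel_integrand :: "(real \<Rightarrow> real \<Rightarrow> real) \<Rightarrow> real \<Rightarrow> real \<Rightarrow> real \<Rightarrow> real" where
  "duhamel_integrand u t x s =
     gauss_first_moment (\<lambda>y. \<bar>u s y\<bar>) (sqrt (2 * (t - s))) x / sqrt (2 * (t - s))"

lemma deriv_heat_eq_duhamel_integrand:
  assumes "u s \<in> Cub" "s < t"
  shows "deriv (\<lambda>z. heat (t - s) (\<lambda>y. \<bar>u s y\<bar>) z) x = duhamel_integrand u t x s"
proof -
  obtain B where "\<And>y. \<bar>u s y\<bar> \<le> B"
    using Cub_bounded[OF assms(1)] by blast
  moreover have "(\<lambda>y. \<bar>u s y\<bar>) \<in> borel_measurable borel"
    using Cub_borel_measurable[OF assms(1)] by measurable
  ultimately have "deriv (heat (t - s) (\<lambda>y. \<bar>u s y\<bar>)) x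
      = gauss_first_moment (\<lambda>y. \<bar>u s y\<bar>) (sqrt (2 * (t - s))) x / sqrt (2 * (t - s))"
    using assms(2) by (intro deriv_heat[where B = B]) auto
  then show ?thesis
    by (simp add: duhamel_integrand_def)
qed

lemma mild_solution_iff_duhamel:
  "mild_solution u0 u \<longleftrightarrow> cont_Cub_path u \<and>
     (\<forall>t\<ge>0. \<forall>x. u t x = heat t u0 x + integral {0..t} (duhamel_integrand u t x))"
proof -
  have "integral {0..t} (\<lambda>s. deriv (\<lambda>z. heat (t - s) (\<lambda>y. \<bar>u s y\<bar>) z) x)
      = integral {0..t} (duhamel_integrand u t x)" if "cont_Cub_path u" for t x
    using that by (intro integral_spike[where S = "{t}"])
      (auto simp: cont_Cub_path_def intro!: deriv_heat_eq_duhamel_integrand[symmetric])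
  then show ?thesis
    unfolding mild_solution_def by auto
qed

lemma continuous_on_duhamel_moment:
  assumes u: "cont_Cub_path u"
  shows "continuous_on {0..t} (\<lambda>s. gauss_first_moment (\<lambda>y. \<bar>u s y\<bar>) (sqrt (2 * (t - s))) x)"
proof -
  obtain B where B: "\<And>s y. 0 \<le> s \<Longrightarrow> s \<le> t \<Longrightarrow> \<bar>u s y\<bar> \<le> B"
    using cont_Cub_path_bounded[OF u] by blast
  have meas: "u s \<in> borel_measurable borel" if "0 \<le> s" for s
    using u that unfolding cont_Cub_path_def by (blast intro: Cub_borel_measurable)
  have cont: "continuous_on {0..t} (\<lambda>s. u s (x + sqrt (2 * (t - s)) * z))" for z
  proof -
    have "continuous_on {0..t} ((\<lambda>(s, y). u s y) \<circ> (\<lambda>s. (s, x + sqrt (2 * (t - s)) * z)))"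
      by (rule continuous_on_compose)
        (auto intro!: continuous_intros intro: continuous_on_subset[OF cont_Cub_path_continuous_on[OF u]])
    then show ?thesis by (simp add: o_def)
  qed
  have integrand_meas:
    "(\<lambda>z. std_normal_density z * z * \<bar>u s (x + sqrt (2 * (t - s)) * z)\<bar>) \<in> borel_measurable lborel"
    if "s \<in> {0..t}" for s
  proof -
    have [measurable]: "u s \<in> borel_measurable borel"
      using meas that by simp
    show ?thesis by measurable
  qed
  show ?thesis
    unfolding continuous_on_def gauss_first_moment_def
  proof (intro ballI tendsto_integral_dominated[where w = "\<lambda>z. std_normal_density z * \<bar>z\<bar> * B"])
    fix s0
    assume s0: "s0 \<in> {0..t}"
    show "integrable lborel (\<lambda>z. std_normal_density z * \<bar>z\<bar> * B)"
      using integrable_std_normal_moment_abs[of 1] by simp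
    show "AE z in lborel. ((\<lambda>s. std_normal_density z * z * \<bar>u s (x + sqrt (2 * (t - s)) * z)\<bar>)
        \<longlongrightarrow> std_normal_density z * z * \<bar>u s0 (x + sqrt (2 * (t - s0)) * z)\<bar>) (at s0 within {0..t})"
      using cont s0 unfolding continuous_on_def by (intro AE_I2 tendsto_mult_left tendsto_rabs) blast
    show "\<forall>\<^sub>F s in at s0 within {0..t}. AE z in lborel.
        \<bar>std_normal_density z * z * \<bar>u s (x + sqrt (2 * (t - s)) * z)\<bar>\<bar> \<le> std_normal_density z * \<bar>z\<bar> * B"
      unfolding eventually_at_filter
      using B by (intro always_eventually allI impI AE_I2) (simp add: abs_mult mult_left_mono)
  qed (use integrand_meas in auto)
qed

lemma has_integral_inverse_sqrt:
  assumes "a \<le> t"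
  shows "((\<lambda>s. 1 / sqrt (2 * (t - s))) has_integral sqrt (2 * (t - a))) {a..t}"
proof -
  have "((\<lambda>s. 1 / sqrt (2 * (t - s))) has_integral - sqrt (2 * (t - t)) - - sqrt (2 * (t - a))) {a..t}"
  proof (rule fundamental_theorem_of_calculus_interior[OF assms])
    show "continuous_on {a..t} (\<lambda>s. - sqrt (2 * (t - s)))"
      by (intro continuous_intros)
    fix s
    assume "s \<in> {a<..<t}"
    then have "((\<lambda>s. - sqrt (2 * (t - s))) has_real_derivative 1 / sqrt (2 * (t - s))) (at s)"
      by (auto intro!: derivative_eq_intros simp: field_simps)
    then show "((\<lambda>s. - sqrt (2 * (t - s))) has_vector_derivative 1 / sqrt (2 * (t - s))) (at s)"
      by (simp add: has_real_derivative_iff_has_vector_derivative)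
  qed
  then show ?thesis by simp
qed

lemma duhamel_integrand_integrable:
  assumes u: "cont_Cub_path u" and t: "0 \<le> t"
  shows "duhamel_integrand u t x integrable_on {0..t}"
proof -
  let ?P = "\<lambda>s. gauss_first_moment (\<lambda>y. \<bar>u s y\<bar>) (sqrt (2 * (t - s))) x"
  have P: "continuous_on {0..t} ?P"
    by (rule continuous_on_duhamel_moment[OF u])
  have "(\<lambda>s. 1 / sqrt (2 * (t - s))) absolutely_integrable_on {0..t}"
    using has_integral_inverse_sqrt[OF t] by (intro nonnegative_absolutely_integrable_1) auto
  then have "(\<lambda>s. ?P s * (1 / sqrt (2 * (t - s)))) absolutely_integrable_on {0..t}"
    using P by (intro absolutely_integrable_bounded_measurable_product_real
        continuous_imp_measurable_on_sets_lebesgue compact_imp_bounded compact_continuous_image) auto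
  moreover have "duhamel_integrand u t x = (\<lambda>s. ?P s * (1 / sqrt (2 * (t - s))))"
    by (simp add: fun_eq_iff duhamel_integrand_def)
  ultimately show ?thesis
    by (simp add: absolutely_integrable_on_def)
qed

lemma duhamel_integrand_diff_le:
  assumes cub: "u s \<in> Cub" "v s \<in> Cub" and "s \<le> t"
    and close: "\<And>y. \<bar>u s y - v s y\<bar> \<le> E"
  shows "\<bar>duhamel_integrand u t x s - duhamel_integrand v t x s\<bar> \<le> E / sqrt (2 * (t - s))"
proof -
  obtain Bu where Bu: "\<And>y. \<bar>u s y\<bar> \<le> Bu"
    using Cub_bounded[OF cub(1)] by blast
  obtain Bv where Bv: "\<And>y. \<bar>v s y\<bar> \<le> Bv"
    using Cub_bounded[OF cub(2)] by blast
  have "\<bar>gauss_first_moment (\<lambda>y. \<bar>u s y\<bar>) (sqrt (2 * (t - s))) x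
      - gauss_first_moment (\<lambda>y. \<bar>v s y\<bar>) (sqrt (2 * (t - s))) x\<bar> \<le> E"
  proof (rule gauss_first_moment_diff_le)
    show "(\<lambda>y. \<bar>u s y\<bar>) \<in> borel_measurable borel"
      by (intro borel_measurable_abs Cub_borel_measurable cub(1))
    show "(\<lambda>y. \<bar>v s y\<bar>) \<in> borel_measurable borel"
      by (intro borel_measurable_abs Cub_borel_measurable cub(2))
    show "\<bar>\<bar>u s y\<bar>\<bar> \<le> Bu" "\<bar>\<bar>v s y\<bar>\<bar> \<le> Bv" for y
      using Bu Bv by simp_all
    show "\<bar>\<bar>u s y\<bar> - \<bar>v s y\<bar>\<bar> \<le> E" for y
      using close[of y] abs_triangle_ineq3[of "u s y" "v s y"] by linarith
  qed
  then show ?thesis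
    using \<open>s \<le> t\<close>
    by (simp add: duhamel_integrand_def diff_divide_distrib[symmetric] abs_divide divide_right_mono)
qed

lemma mild_solution_diff_le:
  assumes u: "mild_solution u0 u" and v: "mild_solution u0 v"
    and a: "0 \<le> a" "a \<le> t"
    and agree: "\<And>s y. 0 \<le> s \<Longrightarrow> s < a \<Longrightarrow> u s y = v s y"
    and close: "\<And>s y. a \<le> s \<Longrightarrow> s \<le> t \<Longrightarrow> \<bar>u s y - v s y\<bar> \<le> E"
  shows "\<bar>u t x - v t x\<bar> \<le> sqrt (2 * (t - a)) * E"
proof -
  have cu: "cont_Cub_path u" and cv: "cont_Cub_path v"
    using u v by (simp_all add: mild_solution_iff_duhamel)
  define D where "D s = duhamel_integrand u t x s - duhamel_integrand v t x s" for s
  have D_int: "D integrable_on {0..t}"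
    unfolding D_def using cu cv a by (intro integrable_diff duhamel_integrand_integrable) auto
  have "u t x - v t x = integral {0..t} (duhamel_integrand u t x) - integral {0..t} (duhamel_integrand v t x)"
    using u v a by (simp add: mild_solution_iff_duhamel)
  also have "\<dots> = integral {0..t} D"
    unfolding D_def using cu cv a by (intro integral_diff[symmetric] duhamel_integrand_integrable) auto
  also have "\<dots> = integral {0..a} D + integral {a..t} D"
    using a D_int by (intro Henstock_Kurzweil_Integration.integral_combine[symmetric]) auto
  also have "integral {0..a} D = 0"
  proof -
    have "D s = 0" if "s \<in> {0..a} - {a}" for s
    proof -
      have "u s = v s" using agree that by fastforce
      then show ?thesis by (simp add: D_def duhamel_integrand_def)
    qed
    then show ?thesis
      using integral_spike[of "{a}" "{0..a}" "\<lambda>_. 0" D] by simp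
  qed
  finally have diff: "u t x - v t x = integral {a..t} D" by simp
  have bound: "\<bar>D s\<bar> \<le> E / sqrt (2 * (t - s))" if "a \<le> s" "s \<le> t" for s
    unfolding D_def using cu cv a that close
    by (intro duhamel_integrand_diff_le) (auto simp: cont_Cub_path_def)
  have G: "((\<lambda>s. E / sqrt (2 * (t - s))) has_integral E * sqrt (2 * (t - a))) {a..t}"
    using has_integral_mult_right[OF has_integral_inverse_sqrt[OF a(2)], of E] by simp
  have "\<bar>integral {a..t} D\<bar> \<le> integral {a..t} (\<lambda>s. E / sqrt (2 * (t - s)))"
    using Henstock_Kurzweil_Integration.integral_norm_bound_integral[of D "{a..t}" "\<lambda>s. E / sqrt (2 * (t - s))"]
      integrable_subinterval_real[OF D_int] G bound a by fastforce
  then show ?thesis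
    using diff G by (simp add: integral_unique mult.commute)
qed

text \<open>On a step of length \<open>1/8\<close> the factor \<open>sqrt (2 * (t - a))\<close> of \<open>mild_solution_diff_le\<close>
  is at most \<open>1/2\<close>, so the supremum \<open>M\<close> of the difference on the step satisfies \<open>M \<le> M / 2\<close>.\<close>
lemma mild_solution_agree_step:
  assumes u: "mild_solution u0 u" and v: "mild_solution u0 v" and a: "0 \<le> a"
    and agree: "\<And>s y. 0 \<le> s \<Longrightarrow> s < a \<Longrightarrow> u s y = v s y"
    and s: "0 \<le> s" "s \<le> a + 1/8"
  shows "u s y = v s y"
proof -
  obtain Bu Bv where Bu: "\<And>s y. 0 \<le> s \<Longrightarrow> s \<le> a + 1/8 \<Longrightarrow> \<bar>u s y\<bar> \<le> Bu"
    and Bv: "\<And>s y. 0 \<le> s \<Longrightarrow> s \<le> a + 1/8 \<Longrightarrow> \<bar>v s y\<bar> \<le> Bv"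
    using u v by (metis mild_solution_iff_duhamel cont_Cub_path_bounded)
  define Diffs where "Diffs = {\<bar>u s y - v s y\<bar> | s y. a \<le> s \<and> s \<le> a + 1/8}"
  define M where "M = Sup Diffs"
  have "bdd_above Diffs"
    unfolding Diffs_def using Bu Bv a
    by (intro bdd_aboveI[where M = "Bu + Bv"]) (force intro: order_trans[OF abs_triangle_ineq4] add_mono)
  then have le_M: "\<bar>u s y - v s y\<bar> \<le> M" if "a \<le> s" "s \<le> a + 1/8" for s y
    unfolding M_def Diffs_def using that by (intro cSup_upper) auto
  have "0 \<le> M"
    using order_trans[OF abs_ge_zero le_M[of a]] by simp
  have "\<bar>u t x - v t x\<bar> \<le> M / 2" if t: "a \<le> t" "t \<le> a + 1/8" for t x
  proof -
    have "sqrt (2 * (t - a)) \<le> sqrt ((1/2)\<^sup>2)"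
      using t by (intro real_sqrt_le_mono) (simp add: power2_eq_square)
    then have "sqrt (2 * (t - a)) * M \<le> 1/2 * M"
      using \<open>0 \<le> M\<close> by (intro mult_right_mono) auto
    moreover have "\<bar>u t x - v t x\<bar> \<le> sqrt (2 * (t - a)) * M"
      using a t agree le_M by (intro mild_solution_diff_le[OF u v]) auto
    ultimately show ?thesis by simp
  qed
  then have "M \<le> M / 2"
    unfolding M_def Diffs_def using a by (intro cSup_least) force+
  then show ?thesis
    using le_M[of s y] agree[of s y] s by (cases "s < a") auto
qed

lemma mild_solution_unique:
  assumes u: "mild_solution u0 u" and v: "mild_solution u0 v" and t: "0 \<le> t"
  shows "u t = v t"
proof -
  have "\<forall>s y. 0 \<le> s \<longrightarrow> s < n / 8 \<longrightarrow> u s y = v s y" for n :: nat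
  proof (induction n)
    case (Suc n)
    then show ?case
      using mild_solution_agree_step[OF u v, of "n / 8"] by (auto simp: field_simps)
  qed simp
  moreover obtain n :: nat where "8 * t < n"
    using reals_Archimedean2 by blast
  ultimately show ?thesis
    using t by (auto simp: fun_eq_iff field_simps)
qed

section \<open>Odd symmetry\<close>

lemma cont_Cub_path_reflect:
  assumes u: "cont_Cub_path u"
  shows "cont_Cub_path (\<lambda>t x. - u t (- x))"
  unfolding cont_Cub_path_def
proof (intro conjI allI impI)
  fix t :: real
  assume "0 \<le> t"
  then show "(\<lambda>x. - u t (- x)) \<in> Cub"
    using u by (simp add: cont_Cub_path_def Cub_reflect)
next
  fix t e :: real
  assume "0 \<le> t" "0 < e"
  then obtain d where "d > 0" and d: "\<forall>s\<ge>0. \<bar>s - t\<bar> < d \<longrightarrow> (\<forall>x. \<bar>u s x - u t x\<bar> \<le> e)"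
    using u unfolding cont_Cub_path_def by blast
  show "\<exists>d>0. \<forall>s\<ge>0. \<bar>s - t\<bar> < d \<longrightarrow> (\<forall>x. \<bar>- u s (- x) - - u t (- x)\<bar> \<le> e)"
  proof (intro exI[of _ d] conjI allI impI)
    fix s x :: real
    assume "0 \<le> s" "\<bar>s - t\<bar> < d"
    then have "\<bar>u s (- x) - u t (- x)\<bar> \<le> e" using d by blast
    then show "\<bar>- u s (- x) - - u t (- x)\<bar> \<le> e"
      by (simp only: minus_diff_minus abs_minus_cancel)
  qed (rule \<open>d > 0\<close>)
qed

lemma heat_reflect:
  assumes g: "g \<in> borel_measurable borel" and bound: "\<And>y. \<bar>g y\<bar> \<le> B"
  shows "heat t (\<lambda>y. g (- y)) x = heat t g (- x)"
proof (cases "t \<le> 0")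
  case True
  then show ?thesis by (simp add: heat_def)
next
  case False
  then have t: "t > 0" by simp
  have density: "normal_density x (sqrt (2 * t)) (- y) = normal_density (- x) (sqrt (2 * t)) y" for y
    by (simp add: normal_density_def power2_eq_square algebra_simps)
  have "heat t (\<lambda>y. g (- y)) x = (\<integral>y. normal_density x (sqrt (2 * t)) y * g (- y) \<partial>lborel)"
    using g bound by (intro heat_eq_normal_convolution[OF t]) auto
  also have "\<dots> = \<bar>-1\<bar> *\<^sub>R (\<integral>y. normal_density x (sqrt (2 * t)) (0 + -1 * y) * g (- (0 + -1 * y)) \<partial>lborel)"
    by (rule lborel_integral_real_affine) simp
  also have "\<dots> = heat t g (- x)"
    using heat_eq_normal_convolution[OF t g bound] by (simp add: density)
  finally show ?thesis .
qed

lemma gauss_first_moment_reflect: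
  "gauss_first_moment (\<lambda>y. g (- y)) \<sigma> x = - gauss_first_moment g \<sigma> (- x)"
proof -
  have "gauss_first_moment (\<lambda>y. g (- y)) \<sigma> x
      = \<bar>-1\<bar> *\<^sub>R (\<integral>z. std_normal_density (0 + -1 * z) * (0 + -1 * z) * g (- (x + \<sigma> * (0 + -1 * z))) \<partial>lborel)"
    unfolding gauss_first_moment_def by (rule lborel_integral_real_affine) simp
  also have "\<dots> = - gauss_first_moment g \<sigma> (- x)"
    by (simp add: gauss_first_moment_def std_normal_density_def)
  finally show ?thesis .
qed

lemma heat_uminus: "heat t (\<lambda>y. - g y) x = - heat t g x"
  by (simp add: heat_def)

lemma duhamel_integrand_reflect:
  "duhamel_integrand (\<lambda>t x. - u t (- x)) t x = (\<lambda>s. - duhamel_integrand u t (- x) s)"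
  using gauss_first_moment_reflect[of "\<lambda>y. \<bar>u _ y\<bar>"] by (simp add: fun_eq_iff duhamel_integrand_def)

lemma mild_solution_reflect:
  assumes u0: "u0 \<in> Cub" and odd: "\<And>x. u0 (- x) = - u0 x" and u: "mild_solution u0 u"
  shows "mild_solution u0 (\<lambda>t x. - u t (- x))"
  unfolding mild_solution_iff_duhamel
proof (intro conjI allI impI)
  show "cont_Cub_path (\<lambda>t x. - u t (- x))"
    using u by (simp add: mild_solution_iff_duhamel cont_Cub_path_reflect)
  fix t x :: real
  assume "0 \<le> t"
  obtain B where "\<And>y. \<bar>u0 y\<bar> \<le> B"
    using Cub_bounded[OF u0] by blast
  then have "heat t u0 (- x) = heat t (\<lambda>y. - u0 y) x"
    using heat_reflect[OF Cub_borel_measurable[OF u0], of B t x] by (simp add: odd)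
  moreover have "u t (- x) = heat t u0 (- x) + integral {0..t} (duhamel_integrand u t (- x))"
    using u \<open>0 \<le> t\<close> by (simp add: mild_solution_iff_duhamel)
  ultimately show "- u t (- x) = heat t u0 x + integral {0..t} (duhamel_integrand (\<lambda>t x. - u t (- x)) t x)"
    by (simp add: heat_uminus duhamel_integrand_reflect)
qed

theorem lemma3p8:
  fixes u0 :: "real \<Rightarrow> real" and u :: "real \<Rightarrow> real \<Rightarrow> real"
  assumes "u0 \<in> C1ub"
    and "\<And>x. u0 (- x) = - u0 x"
    and "mild_solution u0 u"
  shows "\<forall>t\<ge>0. \<forall>x. u t (- x) = - u t x"
proof (intro allI impI)
  fix t x :: real
  assume "t \<ge> 0"
  have "u0 \<in> Cub"
    using assms(1) by (simp add: C1ub_def)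
  then have "mild_solution u0 (\<lambda>t x. - u t (- x))"
    using assms(2,3) by (rule mild_solution_reflect)
  then have "u t = (\<lambda>x. - u t (- x))"
    using mild_solution_unique[OF assms(3)] \<open>t \<ge> 0\<close> by blast
  then have "u t (- x) = - u t (- (- x))"
    by (rule fun_cong)
  then show "u t (- x) = - u t x"
    by simp
qed

end
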